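(* Let $X$ be a non-negative continuous random variable with density $f$ satisfying $f(t) \le Ce^{-\lambda t}$ for all $t\ge0$, for some $C,\lambda>0$. Let $m \in (\chi_{\min},\chi_{\max})$ and $\mu = \min(\Pr[X\le m],\Pr[X\ge m])$ (so $\mu>0$). Let $Y$ be an $m$-reasonable random variable with density $g$. Then $g(t) \le \frac{C}{\mu}e^{-\lambda t}$ for all $t$, $\mathbb{E}[Y] \le \frac{C}{\mu\lambda}\cdot\frac{1}{\lambda}$, $\mathbb{E}[Y^2] \le \frac{C}{\mu\lambda}\cdot\frac{2}{\lambda^2}$, and $\Pr[Y\ge t] \le \frac{C}{\lambda\mu}e^{-\lambda t}$ for all $t \ge 0$.
   Context: $\chi_{\min} = \inf\{x:\Pr[X\ge x]>0\}$, $\chi_{\max} = \sup\{x:\Pr[X\le x]>0\}$. $X_{\le x}$ ($X_{\ge x}$) denotes $X$ conditioned on $X \le x$ ($X\ge x$). For $m\in(\chi_{\min},\chi_{\max})$, a random variable $Y$ is $m$-reasonable if either $Y = X_{\ge x}$ for some $x \le m$, or $Y = X_{\le x}$ for some $x\ge m$. *)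

theory Defs
  imports "HOL-Probability.Probability"
begin

text \<open>A continuous real random variable is represented by its density f (w.r.t. Lebesgue
measure); its distribution is the measure below.\<close>

definition dist_of :: "(real \<Rightarrow> real) \<Rightarrow> real measure" where
  "dist_of f = density lborel (\<lambda>t. ennreal (f t))"

definition Pr_le :: "(real \<Rightarrow> real) \<Rightarrow> real \<Rightarrow> real" where
  "Pr_le f x = measure (dist_of f) {..x}"

definition Pr_ge :: "(real \<Rightarrow> real) \<Rightarrow> real \<Rightarrow> real" where
  "Pr_ge f x = measure (dist_of f) {x..}"

text \<open>Essential infimum / supremum of the support (extended reals).\<close>
definition chi_min :: "(real \<Rightarrow> real) \<Rightarrow> ereal" where
  "chi_min f = Inf (ereal ` {x. Pr_le f x > 0})"

definition chi_max :: "(real \<Rightarrow> real) \<Rightarrow> ereal" where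
  "chi_max f = Sup (ereal ` {x. Pr_ge f x > 0})"

definition cond_ge_density :: "(real \<Rightarrow> real) \<Rightarrow> real \<Rightarrow> real \<Rightarrow> real" where
  "cond_ge_density f x = (\<lambda>t. indicator {x..} t * f t / Pr_ge f x)"

definition cond_le_density :: "(real \<Rightarrow> real) \<Rightarrow> real \<Rightarrow> real \<Rightarrow> real" where
  "cond_le_density f x = (\<lambda>t. indicator {..x} t * f t / Pr_le f x)"

definition m_reasonable :: "(real \<Rightarrow> real) \<Rightarrow> real \<Rightarrow> (real \<Rightarrow> real) \<Rightarrow> bool" where
  "m_reasonable f m g \<longleftrightarrow>
     (\<exists>x\<le>m. g = cond_ge_density f x) \<or> (\<exists>x\<ge>m. g = cond_le_density f x)"

end

theory Submission
  imports Defs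
begin

text \<open>An \<open>m\<close>-reasonable variable has density \<open>1\<^sub>S f / P\<close> for a Borel set \<open>S\<close> and a
  normalising probability \<open>P \<ge> \<mu>\<close>. Hence its density is at most \<open>f / \<mu>\<close>, i.e. at most
  \<open>C / (\<mu> \<lambda>)\<close> times the density \<open>\<lambda> exp (-\<lambda> t)\<close> of the exponential distribution, and its
  moments and tails are bounded by those of that distribution scaled by \<open>C / (\<mu> \<lambda>)\<close>.\<close>

lemma has_bochner_integral_exponential_moment:
  assumes l: "0 < l"
  shows "has_bochner_integral lborel (\<lambda>x. exponential_density l x * x ^ i) (fact i / l ^ i)"
proof (rule has_bochner_integral_nn_integral)
  show "AE x in lborel. 0 \<le> exponential_density l x * x ^ i"
    using l by (intro AE_I2) (auto simp: exponential_density_def)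
  show "(\<integral>\<^sup>+ x. ennreal (exponential_density l x * x ^ i) \<partial>lborel) = ennreal (fact i / l ^ i)"
    using nn_integral_erlang_ith_moment[OF l, of 0 i] by simp
qed (use l in simp_all)

lemma nn_integral_exponential_density_shift:
  assumes l: "0 < l"
  shows "(\<integral>\<^sup>+ x. ennreal (exponential_density l (x - t)) \<partial>lborel) = 1"
proof -
  have "(\<integral>\<^sup>+ x. ennreal (exponential_density l x) \<partial>lborel)
      = ennreal \<bar>1::real\<bar> * (\<integral>\<^sup>+ x. ennreal (exponential_density l (- t + 1 * x)) \<partial>lborel)"
    by (rule nn_integral_real_affine[where c=1 and t="-t"]) auto
  then show ?thesis
    using nn_integral_erlang_ith_moment[OF l, of 0 0] by simp
qed

lemma integral_moment_le_exponential:
  fixes h :: "real \<Rightarrow> real"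
  assumes l: "0 < l" and h_meas[measurable]: "h \<in> borel_measurable borel"
    and h_nonneg: "\<And>t. 0 \<le> h t"
    and h_le: "\<And>t. h t \<le> K * exponential_density l t"
  shows "(\<integral>t. t ^ i * h t \<partial>lborel) \<le> K * (fact i / l ^ i)"
proof -
  have bound: "has_bochner_integral lborel (\<lambda>t. K * (exponential_density l t * t ^ i))
      (K * (fact i / l ^ i))"
    by (intro has_bochner_integral_mult_right has_bochner_integral_exponential_moment l)
  then have bound_int: "integrable lborel (\<lambda>t. K * (exponential_density l t * t ^ i))"
    by (simp add: has_bochner_integral_iff)
  have moment_le: "0 \<le> t ^ i * h t \<and> t ^ i * h t \<le> K * (exponential_density l t * t ^ i)" for t
  proof (cases "t < 0")
    case True
    with h_le[of t] h_nonneg[of t] have "h t = 0"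
      by (simp add: exponential_density_def)
    with True show ?thesis by (simp add: exponential_density_def)
  next
    case False
    then have "t ^ i * h t \<le> t ^ i * (K * exponential_density l t)"
      using h_le[of t] by (intro mult_left_mono) auto
    with False h_nonneg[of t] show ?thesis by (simp add: ac_simps)
  qed
  have "integrable lborel (\<lambda>t. t ^ i * h t)"
    by (rule Bochner_Integration.integrable_bound[OF bound_int])
       (use moment_le in \<open>auto intro!: AE_I2 intro: order_trans[OF _ abs_ge_self]\<close>)
  then have "(\<integral>t. t ^ i * h t \<partial>lborel) \<le> (\<integral>t. K * (exponential_density l t * t ^ i) \<partial>lborel)"
    using bound_int moment_le by (intro integral_mono) auto
  also have "\<dots> = K * (fact i / l ^ i)"
    using bound by (simp add: has_bochner_integral_iff)
  finally show ?thesis .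
qed

lemma measure_atLeast_le_exponential:
  fixes h :: "real \<Rightarrow> real"
  assumes l: "0 < l" and K: "0 \<le> K" and t: "0 \<le> t"
    and h_meas[measurable]: "h \<in> borel_measurable borel"
    and h_le: "\<And>s. h s \<le> K * exponential_density l s"
  shows "measure (dist_of h) {t..} \<le> K * exp (- l * t)"
proof -
  have shifted: "ennreal (h s) * indicator {t..} s
      \<le> ennreal (K * exp (- l * t)) * ennreal (exponential_density l (s - t))" for s
  proof (cases "t \<le> s")
    case True
    \<comment> \<open>memorylessness: \<open>\<lambda> exp (-\<lambda> s) = exp (-\<lambda> t) \<cdot> \<lambda> exp (-\<lambda> (s - t))\<close>\<close>
    have "h s \<le> K * exp (- l * t) * exponential_density l (s - t)"
      using h_le[of s] True t
      by (simp add: exponential_density_def field_simps mult_exp_exp)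
    with True K show ?thesis by (simp add: ennreal_mult'[symmetric] ennreal_leI)
  qed simp
  have "emeasure (dist_of h) {t..} = (\<integral>\<^sup>+ s. ennreal (h s) * indicator {t..} s \<partial>lborel)"
    by (simp add: dist_of_def emeasure_density)
  also have "\<dots> \<le> (\<integral>\<^sup>+ s. ennreal (K * exp (- l * t)) * ennreal (exponential_density l (s - t)) \<partial>lborel)"
    by (intro nn_integral_mono shifted)
  also have "\<dots> = ennreal (K * exp (- l * t))"
    by (simp add: nn_integral_cmult nn_integral_exponential_density_shift[OF l])
  finally show ?thesis
    unfolding measure_def using K by (intro enn2real_leI) auto
qed

context
  fixes f :: "real \<Rightarrow> real"
  assumes f_prob: "prob_space (dist_of f)"
begin

interpretation X: prob_space "dist_of f" by (rule f_prob)

lemma Pr_le_mono: "a \<le> b \<Longrightarrow> Pr_le f a \<le> Pr_le f b"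
  unfolding Pr_le_def by (intro X.finite_measure_mono) (auto simp: dist_of_def)

lemma Pr_ge_antimono: "a \<le> b \<Longrightarrow> Pr_ge f b \<le> Pr_ge f a"
  unfolding Pr_ge_def by (intro X.finite_measure_mono) (auto simp: dist_of_def)

lemma Pr_le_pos_if_chi_min_less: "chi_min f < ereal m \<Longrightarrow> 0 < Pr_le f m"
  unfolding chi_min_def
  by (auto simp: Inf_less_iff intro: less_le_trans[OF _ Pr_le_mono])

lemma Pr_ge_pos_if_less_chi_max: "ereal m < chi_max f \<Longrightarrow> 0 < Pr_ge f m"
  unfolding chi_max_def
  by (auto simp: less_Sup_iff intro: less_le_trans[OF _ Pr_ge_antimono])

lemma m_reasonable_obtains_restriction:
  assumes "m_reasonable f m g"
  obtains S P where "S \<in> sets borel" "min (Pr_le f m) (Pr_ge f m) \<le> P"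
    and "g = (\<lambda>t. indicator S t * f t / P)"
  using assms unfolding m_reasonable_def
proof (elim disjE exE conjE)
  fix x assume "x \<le> m" "g = cond_ge_density f x"
  with Pr_ge_antimono[of x m] show thesis
    by (intro that[of "{x..}" "Pr_ge f x"]) (auto simp: cond_ge_density_def)
next
  fix x assume "m \<le> x" "g = cond_le_density f x"
  with Pr_le_mono[of m x] show thesis
    by (intro that[of "{..x}" "Pr_le f x"]) (auto simp: cond_le_density_def)
qed

end

theorem lemma2:
  fixes f g :: "real \<Rightarrow> real" and C l m :: real
  assumes f_meas: "f \<in> borel_measurable borel"
    and f_nonneg: "\<And>t. 0 \<le> f t"
    and X_nonneg: "\<And>t. t < 0 \<Longrightarrow> f t = 0"
    and f_prob: "prob_space (dist_of f)"
    and C_pos: "C > 0" and l_pos: "l > 0"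
    and f_bound: "\<And>t. t \<ge> 0 \<Longrightarrow> f t \<le> C * exp (- l * t)"
    and m_lo: "chi_min f < ereal m" and m_hi: "ereal m < chi_max f"
    and Y: "m_reasonable f m g"
  defines "mu \<equiv> min (Pr_le f m) (Pr_ge f m)"
  shows "(\<forall>t. g t \<le> C / mu * exp (- l * t))
       \<and> (\<integral>t. t * g t \<partial>lborel) \<le> C / (mu * l) * (1 / l)
       \<and> (\<integral>t. t\<^sup>2 * g t \<partial>lborel) \<le> C / (mu * l) * (2 / l\<^sup>2)
       \<and> (\<forall>t\<ge>0. measure (dist_of g) {t..} \<le> C / (l * mu) * exp (- l * t))"
proof -
  have mu_pos: "0 < mu"
    using Pr_le_pos_if_chi_min_less[OF f_prob m_lo] Pr_ge_pos_if_less_chi_max[OF f_prob m_hi]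
    by (simp add: mu_def)
  obtain S P where S[measurable]: "S \<in> sets borel" and P: "mu \<le> P"
    and g_def: "g = (\<lambda>t. indicator S t * f t / P)"
    using m_reasonable_obtains_restriction[OF f_prob Y] unfolding mu_def .
  have g_meas: "g \<in> borel_measurable borel"
    unfolding g_def using f_meas by measurable
  have g_nonneg: "0 \<le> g t" for t
    using f_nonneg[of t] mu_pos P by (simp add: g_def)
  have g_neg: "g t = 0" if "t < 0" for t
    using X_nonneg[OF that] by (simp add: g_def)
  have g_bound: "g t \<le> C / mu * exp (- l * t)" for t
  proof (cases "t < 0")
    case False
    have "g t \<le> f t / mu"
      using f_nonneg[of t] mu_pos P by (auto simp: g_def indicator_def intro: divide_left_mono)
    also have "\<dots> \<le> C * exp (- l * t) / mu"
      using f_bound[of t] False mu_pos by (simp add: divide_right_mono)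
    finally show ?thesis by simp
  qed (use g_neg C_pos mu_pos in simp)
  define K where "K = C / (mu * l)"
  have g_le_K_exponential: "g t \<le> K * exponential_density l t" for t
    using g_bound[of t] g_neg[of t] l_pos
    by (cases "t < 0") (simp_all add: K_def exponential_density_def field_simps)
  have "0 \<le> K" using C_pos mu_pos l_pos by (simp add: K_def)
  show ?thesis
    using g_bound
      integral_moment_le_exponential[OF l_pos g_meas g_nonneg g_le_K_exponential, of 1]
      integral_moment_le_exponential[OF l_pos g_meas g_nonneg g_le_K_exponential, of 2]
      measure_atLeast_le_exponential[OF l_pos \<open>0 \<le> K\<close> _ g_meas g_le_K_exponential]
    by (simp add: K_def mult.commute)
qed

end
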